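(* For a topological space $X$ with a locally countable $\pi$-base, the game $\mathsf{BM}_\omega(X)$ is determined, i.e. one of the two players has a winning strategy.
   Context: A family $\mathcal{B}$ of non-empty open sets of $X$ is a $\pi$-base if every non-empty open set of $X$ contains a member of $\mathcal{B}$; it is locally countable if each member of $\mathcal{B}$ contains only countably many members of $\mathcal{B}$. The game $\mathsf{BM}_\omega(X)$: \textsc{Alice} plays a non-empty open set $A_0$; \textsc{Bob} plays a countable collection $\mathcal{B}_0$ of non-empty open subsets of $A_0$; in inning $n+1$, for each $B \in \mathcal{B}_n$ \textsc{Alice} plays a non-empty open set $A_B \subseteq B$, letting $\mathcal{A}_{n+1}=\{A_B : B\in\mathcal{B}_n\}$, and \textsc{Bob} plays a countable collection $\mathcal{B}_{n+1}$ of non-empty open subsets of $\bigcup\mathcal{A}_{n+1}$. \textsc{Bob} wins if $\bigcap_{n}\bigcup\mathcal{B}_n\neq\emptyset$, otherwise \textsc{Alice} wins. *)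

theory Defs
  imports "HOL-Analysis.Analysis"
begin

definition pi_base :: "'a topology \<Rightarrow> 'a set set \<Rightarrow> bool" where
  "pi_base X \<B> \<longleftrightarrow>
     (\<forall>B\<in>\<B>. openin X B \<and> B \<noteq> {}) \<and>
     (\<forall>U. openin X U \<and> U \<noteq> {} \<longrightarrow> (\<exists>B\<in>\<B>. B \<subseteq> U))"

definition locally_countable_family :: "'a set set \<Rightarrow> bool" where
  "locally_countable_family \<B> \<longleftrightarrow> (\<forall>B\<in>\<B>. countable {C\<in>\<B>. C \<subseteq> B})"

text \<open>A play is described by
  A0 :: Alice's opening move (a nonempty open set),
  f n :: Alice's move in inning n+1, a function assigning to each B in Bs n the set A_B,
  Bs n :: Bob's move in inning n (a countable family of nonempty open sets).\<close>

definition BM_alice_legal0 :: "'a topology \<Rightarrow> 'a set \<Rightarrow> bool" where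
  "BM_alice_legal0 X A0 \<longleftrightarrow> openin X A0 \<and> A0 \<noteq> {}"

definition BM_alice_legal :: "'a topology \<Rightarrow> ('a set set) \<Rightarrow> ('a set \<Rightarrow> 'a set) \<Rightarrow> bool" where
  "BM_alice_legal X Bn g \<longleftrightarrow> (\<forall>B\<in>Bn. openin X (g B) \<and> g B \<noteq> {} \<and> g B \<subseteq> B)"

definition BM_bob_legal :: "'a topology \<Rightarrow> 'a set \<Rightarrow> 'a set set \<Rightarrow> bool" where
  "BM_bob_legal X S Bn \<longleftrightarrow> countable Bn \<and> (\<forall>B\<in>Bn. openin X B \<and> B \<noteq> {} \<and> B \<subseteq> S)"

text \<open>The set Bob's collection in inning n must lie in: A0 for n = 0,
  the union of Alice's sets A_B (B in Bs (n-1)) otherwise.\<close>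
definition BM_region :: "'a set \<Rightarrow> (nat \<Rightarrow> 'a set \<Rightarrow> 'a set) \<Rightarrow> (nat \<Rightarrow> 'a set set) \<Rightarrow> nat \<Rightarrow> 'a set" where
  "BM_region A0 f Bs n = (if n = 0 then A0 else \<Union> (f (n - 1) ` Bs (n - 1)))"

definition BM_bob_wins :: "(nat \<Rightarrow> 'a set set) \<Rightarrow> bool" where
  "BM_bob_wins Bs \<longleftrightarrow> (\<Inter>n. \<Union> (Bs n)) \<noteq> {}"

text \<open>Strategies (perfect information; each player's strategy depends on the
  opponent's previous moves, which together with the strategy determine the whole history).
  Alice: opening move a0 and sigma [Bs 0, ..., Bs n] = her answer to Bs n.
  Bob: tau A0 [f 0, ..., f (n-1)] = his move in inning n.\<close>

definition BM_alice_winning ::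
  "'a topology \<Rightarrow> 'a set \<Rightarrow> ('a set set list \<Rightarrow> 'a set \<Rightarrow> 'a set) \<Rightarrow> bool" where
  "BM_alice_winning X a0 \<sigma> \<longleftrightarrow> BM_alice_legal0 X a0 \<and>
     (\<forall>Bs :: nat \<Rightarrow> 'a set set.
        let f = (\<lambda>n. \<sigma> (map Bs [0..<Suc n])) in
        (\<forall>n. (\<forall>k\<le>n. BM_bob_legal X (BM_region a0 f Bs k) (Bs k))
               \<longrightarrow> BM_alice_legal X (Bs n) (f n)) \<and>
        ((\<forall>n. BM_bob_legal X (BM_region a0 f Bs n) (Bs n)) \<longrightarrow> \<not> BM_bob_wins Bs))"

definition BM_bob_winning ::
  "'a topology \<Rightarrow> ('a set \<Rightarrow> ('a set \<Rightarrow> 'a set) list \<Rightarrow> 'a set set) \<Rightarrow> bool" where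
  "BM_bob_winning X \<tau> \<longleftrightarrow>
     (\<forall>A0 (f :: nat \<Rightarrow> 'a set \<Rightarrow> 'a set).
        let Bs = (\<lambda>n. \<tau> A0 (map f [0..<n])) in
        (\<forall>n. (BM_alice_legal0 X A0 \<and> (\<forall>k<n. BM_alice_legal X (Bs k) (f k)))
               \<longrightarrow> BM_bob_legal X (BM_region A0 f Bs n) (Bs n)) \<and>
        ((BM_alice_legal0 X A0 \<and> (\<forall>n. BM_alice_legal X (Bs n) (f n))) \<longrightarrow> BM_bob_wins Bs))"

definition BM_omega_determined :: "'a topology \<Rightarrow> bool" where
  "BM_omega_determined X \<longleftrightarrow>
     (\<exists>a0 \<sigma>. BM_alice_winning X a0 \<sigma>) \<or> (\<exists>\<tau>. BM_bob_winning X \<tau>)"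

end

theory Submission
  imports Defs
begin

text \<open>If \<open>X\<close> is a Baire space, Bob answers Alice's opening move
  by some member \<open>B\<^sub>0 \<subseteq> A\<^sub>0\<close> of the \<pi>-base and then always plays all members of the
  \<pi>-base inside \<open>B\<^sub>0\<close> that lie in the union of Alice's last answers. Local countability makes
  these moves countable, and each union of them is open and dense in \<open>B\<^sub>0\<close>, so the Baire
  property gives a point common to all of them. Otherwise some nonempty open \<open>B\<^sub>0\<close> misses the
  intersection of dense open sets \<open>W\<^sub>n\<close>; Alice opens with \<open>B\<^sub>0\<close> and in inning \<open>n + 1\<close> answers
  each \<open>B\<close> by \<open>B \<inter> W\<^sub>n\<close>.\<close>

definition Baire_space :: "'a topology \<Rightarrow> bool" where
  "Baire_space X \<longleftrightarrow>
     (\<forall>W. (\<forall>n::nat. openin X (W n) \<and> X closure_of W n = topspace X)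
          \<longrightarrow> X closure_of (\<Inter>n. W n) = topspace X)"

lemma Baire_space_open_Int_nonempty:
  fixes W :: "nat \<Rightarrow> 'a set"
  assumes "Baire_space X" "openin X B" "B \<noteq> {}"
    and "\<And>n. openin X (W n)" "\<And>n. B \<subseteq> X closure_of W n"
  shows "B \<inter> (\<Inter>n. W n) \<noteq> {}"
proof -
  \<comment> \<open>adjoining the exterior of \<open>B\<close> makes each \<open>W n\<close> dense in the whole space\<close>
  define V where "V n = W n \<union> (topspace X - X closure_of B)" for n
  have "X closure_of V n = topspace X" for n
    unfolding dense_intersects_open
  proof (intro allI impI)
    fix T assume T: "openin X T \<and> T \<noteq> {}"
    show "V n \<inter> T \<noteq> {}"
    proof (cases "T \<inter> B = {}")
      case True
      then have "T \<inter> X closure_of B = {}"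
        using T openin_Int_closure_of_eq_empty by blast
      moreover have "T \<subseteq> topspace X"
        using T openin_subset by blast
      ultimately have "T \<subseteq> V n"
        unfolding V_def by blast
      then show ?thesis using T by blast
    next
      case False
      then obtain x where x: "x \<in> T \<inter> B" by blast
      then have "x \<in> X closure_of W n"
        using assms(5) by blast
      moreover have "openin X (T \<inter> B)"
        using T assms(2) by (simp add: openin_Int)
      ultimately obtain y where "y \<in> W n" "y \<in> T"
        using x unfolding in_closure_of by blast
      then show ?thesis by (auto simp: V_def)
    qed
  qed
  moreover have "openin X (V n)" for n
    unfolding V_def by (intro openin_Un openin_diff) (simp_all add: assms(4))
  ultimately have "X closure_of (\<Inter>n. V n) = topspace X"
    using assms(1) unfolding Baire_space_def by blast
  then have "(\<Inter>n. V n) \<inter> B \<noteq> {}"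
    using assms(2,3) dense_intersects_open by blast
  moreover have "B \<inter> (topspace X - X closure_of B) = {}"
    using closure_of_subset[OF openin_subset[OF assms(2)]] by blast
  ultimately show ?thesis by (auto simp: V_def)
qed

lemma not_Baire_space_obtains:
  assumes "\<not> Baire_space X"
  obtains B W where "openin X B" "B \<noteq> {}" "\<And>n::nat. openin X (W n)"
    "\<And>n. X closure_of W n = topspace X" "B \<inter> (\<Inter>n. W n) = {}"
proof -
  obtain W where W: "\<And>n::nat. openin X (W n)" "\<And>n. X closure_of W n = topspace X"
    and "X closure_of (\<Inter>n. W n) \<noteq> topspace X"
    using assms unfolding Baire_space_def by blast
  then obtain B where "openin X B" "B \<noteq> {}" "(\<Inter>n. W n) \<inter> B = {}"
    unfolding dense_intersects_open by blast
  with W that show ?thesis by (metis inf_commute)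
qed

lemma BM_alice_winning_Int_dense:
  assumes B0: "openin X B0" "B0 \<noteq> {}"
    and W: "\<And>n. openin X (W n)" "\<And>n. X closure_of W n = topspace X"
    and disjoint: "B0 \<inter> (\<Inter>n. W n) = {}"
  shows "BM_alice_winning X B0 (\<lambda>L B. B \<inter> W (length L - 1))"
  unfolding BM_alice_winning_def Let_def length_map length_upt diff_zero diff_Suc_1
proof (intro conjI allI impI)
  show "BM_alice_legal0 X B0" using B0 by (simp add: BM_alice_legal0_def)
next
  fix Bs :: "nat \<Rightarrow> 'a set set" and n
  assume "\<forall>k\<le>n. BM_bob_legal X (BM_region B0 (\<lambda>n B. B \<inter> W n) Bs k) (Bs k)"
  then have "openin X B \<and> B \<noteq> {}" if "B \<in> Bs n" for B
    using that by (auto simp: BM_bob_legal_def)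
  then show "BM_alice_legal X (Bs n) (\<lambda>B. B \<inter> W n)"
    using W dense_intersects_open by (fastforce simp: BM_alice_legal_def)
next
  fix Bs :: "nat \<Rightarrow> 'a set set"
  assume legal: "\<forall>n. BM_bob_legal X (BM_region B0 (\<lambda>n B. B \<inter> W n) Bs n) (Bs n)"
  have "(\<Inter>n. \<Union> (Bs n)) \<subseteq> B0 \<inter> (\<Inter>n. W n)"
  proof
    fix x assume "x \<in> (\<Inter>n. \<Union> (Bs n))"
    then have x: "x \<in> \<Union> (Bs k)" for k by blast
    have "\<Union> (Bs 0) \<subseteq> B0"
      using legal[rule_format, of 0] by (auto simp: BM_bob_legal_def BM_region_def)
    with x[of 0] have "x \<in> B0" by blast
    moreover have "x \<in> W n" for n
    proof -
      have "\<Union> (Bs (Suc n)) \<subseteq> W n"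
        using legal[rule_format, of "Suc n"] by (auto simp: BM_bob_legal_def BM_region_def)
      with x[of "Suc n"] show ?thesis by blast
    qed
    ultimately show "x \<in> B0 \<inter> (\<Inter>n. W n)" by blast
  qed
  then show "\<not> BM_bob_wins Bs" using disjoint by (auto simp: BM_bob_wins_def)
qed

text \<open>The clause \<open>C \<subseteq> B0\<close> in the successor step keeps every move countable even
  after illegal moves of Alice.\<close>

primrec pi_base_moves ::
  "'a set set \<Rightarrow> 'a set \<Rightarrow> (nat \<Rightarrow> 'a set \<Rightarrow> 'a set) \<Rightarrow> nat \<Rightarrow> 'a set set" where
  "pi_base_moves \<B> B0 f 0 = {C \<in> \<B>. C \<subseteq> B0}"
| "pi_base_moves \<B> B0 f (Suc n) = {C \<in> \<B>. C \<subseteq> B0 \<and> C \<subseteq> \<Union> (f n ` pi_base_moves \<B> B0 f n)}"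

definition pi_base_strategy :: "'a set set \<Rightarrow> 'a set \<Rightarrow> ('a set \<Rightarrow> 'a set) list \<Rightarrow> 'a set set" where
  "pi_base_strategy \<B> A0 fs = pi_base_moves \<B> (SOME B. B \<in> \<B> \<and> B \<subseteq> A0) ((!) fs) (length fs)"

lemma pi_base_moves_cong: "(\<And>i. i < n \<Longrightarrow> f i = g i) \<Longrightarrow> pi_base_moves \<B> B0 f n = pi_base_moves \<B> B0 g n"
  by (induction n) auto

lemma pi_base_strategy_map_upt:
  "pi_base_strategy \<B> A0 (map f [0..<n]) = pi_base_moves \<B> (SOME B. B \<in> \<B> \<and> B \<subseteq> A0) f n"
  unfolding pi_base_strategy_def length_map length_upt diff_zero by (rule pi_base_moves_cong) simp

lemma pi_base_moves_subset: "pi_base_moves \<B> B0 f n \<subseteq> {C \<in> \<B>. C \<subseteq> B0}"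
  by (cases n) auto

lemma pi_base_moves_refine:
  assumes "pi_base X \<B>" and alice: "\<And>k. k < n \<Longrightarrow> BM_alice_legal X (pi_base_moves \<B> B0 f k) (f k)"
    and U: "openin X U" "U \<noteq> {}" "U \<subseteq> B0"
  shows "\<exists>C \<in> pi_base_moves \<B> B0 f n. C \<subseteq> U"
  using alice
proof (induction n)
  case 0
  obtain C where "C \<in> \<B>" "C \<subseteq> U"
    using assms(1) U unfolding pi_base_def by blast
  with U(3) show ?case by auto
next
  case (Suc n)
  then obtain C where C: "C \<in> pi_base_moves \<B> B0 f n" "C \<subseteq> U"
    by (meson less_Suc_eq)
  then have "openin X (f n C)" "f n C \<noteq> {}" "f n C \<subseteq> C"
    using Suc.prems[of n] by (auto simp: BM_alice_legal_def)
  then obtain C' where "C' \<in> \<B>" "C' \<subseteq> f n C"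
    using assms(1) unfolding pi_base_def by blast
  with C \<open>f n C \<subseteq> C\<close> U(3) have "C' \<in> pi_base_moves \<B> B0 f (Suc n)"
    by auto
  with C(2) \<open>C' \<subseteq> f n C\<close> \<open>f n C \<subseteq> C\<close> show ?case by blast
qed

lemma BM_bob_winning_pi_base_strategy:
  assumes Baire: "Baire_space X" and \<B>: "pi_base X \<B>" "locally_countable_family \<B>"
  shows "BM_bob_winning X (pi_base_strategy \<B>)"
  unfolding BM_bob_winning_def Let_def pi_base_strategy_map_upt
proof (intro allI)
  fix A0 and f :: "nat \<Rightarrow> 'a set \<Rightarrow> 'a set"
  define B0 where "B0 = (SOME B. B \<in> \<B> \<and> B \<subseteq> A0)"
  define Bs where "Bs = pi_base_moves \<B> B0 f"
  have member: "openin X C \<and> C \<noteq> {}" if "C \<in> \<B>" for C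
    using \<B>(1) that by (auto simp: pi_base_def)
  have B0: "B0 \<in> \<B>" "B0 \<subseteq> A0" if "BM_alice_legal0 X A0"
  proof -
    have "\<exists>B. B \<in> \<B> \<and> B \<subseteq> A0" using \<B>(1) that by (auto simp: pi_base_def BM_alice_legal0_def)
    then show "B0 \<in> \<B>" "B0 \<subseteq> A0" unfolding B0_def by (metis (mono_tags, lifting) someI_ex)+
  qed
  show "(\<forall>n. BM_alice_legal0 X A0 \<and> (\<forall>k<n. BM_alice_legal X (Bs k) (f k))
          \<longrightarrow> BM_bob_legal X (BM_region A0 f Bs n) (Bs n)) \<and>
        (BM_alice_legal0 X A0 \<and> (\<forall>n. BM_alice_legal X (Bs n) (f n)) \<longrightarrow> BM_bob_wins Bs)"
  proof (intro conjI allI impI)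
    fix n
    assume "BM_alice_legal0 X A0 \<and> (\<forall>k<n. BM_alice_legal X (Bs k) (f k))"
    then have "B0 \<in> \<B>" "B0 \<subseteq> A0" using B0 by auto
    then have "countable {C \<in> \<B>. C \<subseteq> B0}"
      using \<B>(2) unfolding locally_countable_family_def by blast
    then have "countable (Bs n)"
      unfolding Bs_def by (rule countable_subset[OF pi_base_moves_subset])
    with \<open>B0 \<subseteq> A0\<close> show "BM_bob_legal X (BM_region A0 f Bs n) (Bs n)"
      using member pi_base_moves_subset unfolding Bs_def
      by (cases n) (fastforce simp: BM_bob_legal_def BM_region_def)+
  next
    assume legal: "BM_alice_legal0 X A0 \<and> (\<forall>n. BM_alice_legal X (Bs n) (f n))"
    then have "B0 \<in> \<B>" using B0 by auto
    then have "openin X B0" "B0 \<noteq> {}" using member by auto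
    have dense: "B0 \<subseteq> X closure_of \<Union> (Bs n)" for n
    proof
      fix x assume "x \<in> B0"
      have "\<exists>y \<in> \<Union> (Bs n). y \<in> T" if "x \<in> T" "openin X T" for T
      proof -
        have "openin X (T \<inter> B0)" "T \<inter> B0 \<noteq> {}"
          using that \<open>x \<in> B0\<close> \<open>B0 \<in> \<B>\<close> member by auto
        then obtain C where "C \<in> Bs n" "C \<subseteq> T \<inter> B0"
          using pi_base_moves_refine[OF \<B>(1), of n B0 f "T \<inter> B0"] legal unfolding Bs_def by auto
        then show ?thesis using member pi_base_moves_subset unfolding Bs_def by blast
      qed
      moreover have "x \<in> topspace X"
        using \<open>x \<in> B0\<close> \<open>B0 \<in> \<B>\<close> member openin_subset by blast
      ultimately show "x \<in> X closure_of \<Union> (Bs n)"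
        unfolding in_closure_of by blast
    qed
    have "openin X (\<Union> (Bs n))" for n
      using member pi_base_moves_subset unfolding Bs_def by (intro openin_Union) blast
    from \<open>openin X B0\<close> \<open>B0 \<noteq> {}\<close> this dense
    have "B0 \<inter> (\<Inter>n. \<Union> (Bs n)) \<noteq> {}"
      by (rule Baire_space_open_Int_nonempty[OF Baire])
    then show "BM_bob_wins Bs" by (auto simp: BM_bob_wins_def)
  qed
qed

theorem corollary3p9:
  fixes X :: "'a topology"
  assumes "\<exists>\<B>. pi_base X \<B> \<and> locally_countable_family \<B>"
  shows "BM_omega_determined X"
proof (cases "Baire_space X")
  case True
  with assms show ?thesis
    using BM_bob_winning_pi_base_strategy unfolding BM_omega_determined_def by blast
next
  case False
  then obtain B W where "openin X B" "B \<noteq> {}" "\<And>n::nat. openin X (W n)"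
    "\<And>n. X closure_of W n = topspace X" "B \<inter> (\<Inter>n. W n) = {}"
    using not_Baire_space_obtains[OF False] by blast
  then have "BM_alice_winning X B (\<lambda>L B. B \<inter> W (length L - 1))"
    by (rule BM_alice_winning_Int_dense)
  then show ?thesis unfolding BM_omega_determined_def by blast
qed

end
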